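(* Let $(X,Y)$ be random with $Y\in\{0,1\}$, let $f$ take values in $S=\{s_1,\dots,s_B\}\subseteq[0,1]$, let $T_n=\{(x_j,y_j)\}_{j=1}^n$ be i.i.d. from $(X,Y)$, and let $0<\delta<1$. Suppose $p_i>\frac{12}{n}\log\frac{2B}{\delta}$ for all $i$ and let $c(n)=\sqrt{\frac{3}{n\min_ip_i}\log\frac{2B}{\delta}}$. Then with probability at least $1-3\delta$, $\big|\hat{\mathcal{E}}_{\mathrm{pl}}^2-{E^*}^2\big|\le c(n){E^*}^2+\sqrt{\frac{2(1+c(n)){E^*}^2}{n}\log\frac{2}{\delta}}+\frac{B}{2n}\log\frac{2B}{\delta}$.
   Context: $p_i=\Pr(f(X)=s_i)$, $y_i^*=\mathbb{E}[Y\mid f(X)=s_i]$, ${E^*}^2=\sum_ip_i(s_i-y_i^* )^2$ is the squared calibration error of $f$. $\hat p_i=|\{j:f(x_j)=s_i\}|/n$, $\hat y_i$ is the average of $y_j$ over $j$ with $f(x_j)=s_i$, and the plugin estimator is $\hat{\mathcal{E}}_{\mathrm{pl}}^2=\sum_{i=1}^B\hat p_i(s_i-\hat y_i)^2$. *)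

theory Defs
  imports "HOL-Probability.Probability"
begin

text \<open>D is the joint law of (X,Y) on 'x \<times> real; the score function f takes values
  in S = {s 0, ..., s (B-1)}.  A sample T_n is a map T :: nat \<Rightarrow> 'x \<times> real,
  with entries T j for j < n, distributed according to the product measure.\<close>

definition cal_p :: "('x \<times> real) measure \<Rightarrow> ('x \<Rightarrow> real) \<Rightarrow> (nat \<Rightarrow> real) \<Rightarrow> nat \<Rightarrow> real" where
  "cal_p D f s i = measure D {z \<in> space D. f (fst z) = s i}"

definition cal_ystar :: "('x \<times> real) measure \<Rightarrow> ('x \<Rightarrow> real) \<Rightarrow> (nat \<Rightarrow> real) \<Rightarrow> nat \<Rightarrow> real" where
  "cal_ystar D f s i =
     (LINT z:{z \<in> space D. f (fst z) = s i}|D. snd z) / cal_p D f s i"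

definition cal_err2 :: "('x \<times> real) measure \<Rightarrow> ('x \<Rightarrow> real) \<Rightarrow> (nat \<Rightarrow> real) \<Rightarrow> nat \<Rightarrow> real" where
  "cal_err2 D f s B = (\<Sum>i<B. cal_p D f s i * (s i - cal_ystar D f s i)\<^sup>2)"

definition bin_idx :: "('x \<Rightarrow> real) \<Rightarrow> (nat \<Rightarrow> real) \<Rightarrow> nat \<Rightarrow> (nat \<Rightarrow> 'x \<times> real) \<Rightarrow> nat \<Rightarrow> nat set" where
  "bin_idx f s n T i = {j. j < n \<and> f (fst (T j)) = s i}"

definition hat_p :: "('x \<Rightarrow> real) \<Rightarrow> (nat \<Rightarrow> real) \<Rightarrow> nat \<Rightarrow> (nat \<Rightarrow> 'x \<times> real) \<Rightarrow> nat \<Rightarrow> real" where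
  "hat_p f s n T i = real (card (bin_idx f s n T i)) / real n"

text \<open>Empirical average of y_j over the bin (0 for an empty bin; it is then weighted by hat_p = 0).\<close>
definition hat_y :: "('x \<Rightarrow> real) \<Rightarrow> (nat \<Rightarrow> real) \<Rightarrow> nat \<Rightarrow> (nat \<Rightarrow> 'x \<times> real) \<Rightarrow> nat \<Rightarrow> real" where
  "hat_y f s n T i = (\<Sum>j\<in>bin_idx f s n T i. snd (T j)) / real (card (bin_idx f s n T i))"

definition plugin_err2 :: "('x \<Rightarrow> real) \<Rightarrow> (nat \<Rightarrow> real) \<Rightarrow> nat \<Rightarrow> nat \<Rightarrow> (nat \<Rightarrow> 'x \<times> real) \<Rightarrow> real" where
  "plugin_err2 f s B n T = (\<Sum>i<B. hat_p f s n T i * (s i - hat_y f s n T i)\<^sup>2)"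

end

theory Submission
  imports Defs
begin

(* Write e_i = s_i - y*_i. Bin by bin the plugin estimator splits as
     hat p_i (s_i - hat y_i)^2
       = hat p_i e_i^2 + 2 e_i hat p_i (y*_i - hat y_i) + hat p_i (y*_i - hat y_i)^2.
   If every bin count n hat p_i obeys its multiplicative Chernoff bound, the first terms add up to
   within c(n) E*^2 of E*^2, and in particular to at most V = (1 + c(n)) E*^2.
   The cross terms are a sum over the sample of independent centred contributions; exponentiated
   together with the random compensator lambda^2/(2n) * sum_i hat p_i e_i^2, they factor over the
   sample into factors of mean at most 1 (Hoeffding's lemma in each bin), so the cross term exceeds
   sqrt (2 V log(2/delta) / n) while the first term is at most V with probability at most delta.
   Conditionally on which sample points fall into bin i, their labels are i.i.d. with mean y*_i, so
   Hoeffding's inequality bounds the last term of each bin by log(2B/delta) / (2n), outside an event of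
   probability delta/B. *)

section \<open>Elementary exponential bounds\<close>

lemma bernoulli_mgf_le:
  fixes y \<mu> :: real
  assumes "0 \<le> y" "y \<le> 1"
  shows "(1 - y) * exp (- \<mu> * y) + y * exp (\<mu> * (1 - y)) \<le> exp (\<mu>\<^sup>2 / 8)"
proof -
  have nonneg_case: "(1 - y) * exp (- h * y) + y * exp (h * (1 - y)) \<le> exp (h\<^sup>2 / 8)"
    if "0 \<le> y" "y \<le> 1" "0 \<le> h" for y h :: real
  proof -
    have "0 < 1 + y * (exp h - 1)"
      using that by (smt (verit) exp_ge_add_one_self mult_nonneg_nonneg)
    then have "exp (- h * y) * (1 + y * (exp h - 1)) = exp (- h * y + ln (1 + y * (exp h - 1)))"
      by (subst exp_add) simp
    also have "\<dots> \<le> exp (h\<^sup>2 / 8)"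
      using Hoeffdings_lemma_aux[of h y] that by simp
    finally show ?thesis
      by (simp add: algebra_simps flip: exp_add)
  qed
  show ?thesis
  proof (cases "0 \<le> \<mu>")
    case False
    \<comment> \<open>the left-hand side is invariant under replacing y by 1 - y and \<mu> by - \<mu>\<close>
    then show ?thesis
      using nonneg_case[of "1 - y" "- \<mu>"] assms by (simp add: algebra_simps)
  qed (use nonneg_case assms in blast)
qed

lemma exp_le_quadratic:
  fixes x :: real
  assumes "0 \<le> x" "x \<le> 1/2"
  shows "exp x \<le> 1 + x + 3/4 * x\<^sup>2"
proof -
  let ?g = "\<lambda>x::real. 1 + x + 3/4 * x\<^sup>2 - exp x"
  have "?g 0 \<le> ?g x"
  proof (rule DERIV_nonneg_imp_nondecreasing[OF assms(1)])
    fix t :: real assume t: "0 \<le> t" "t \<le> x"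
    have "exp t \<le> 1 + t + t\<^sup>2"
      using exp_bound[of t] t assms by simp
    moreover have "t\<^sup>2 \<le> t / 2"
      using mult_left_mono[of "2 * t" 1 t] t assms by (simp add: power2_eq_square)
    ultimately show "\<exists>d. (?g has_real_derivative d) (at t) \<and> 0 \<le> d"
      by (intro exI[of _ "1 + 3/2 * t - exp t"]) (auto intro!: derivative_eq_intros)
  qed
  then show ?thesis by simp
qed

lemma exp_minus_le_quadratic:
  fixes x :: real
  assumes "0 \<le> x"
  shows "exp (- x) \<le> 1 - x + x\<^sup>2 / 2"
proof -
  let ?g = "\<lambda>x::real. 1 - x + x\<^sup>2 / 2 - exp (- x)"
  have "?g 0 \<le> ?g x"
  proof (rule DERIV_nonneg_imp_nondecreasing[OF assms])
    fix t :: real assume "0 \<le> t"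
    show "\<exists>d. (?g has_real_derivative d) (at t) \<and> 0 \<le> d"
      using exp_minus_ge[of t]
      by (intro exI[of _ "- 1 + t + exp (- t)"]) (auto intro!: derivative_eq_intros)
  qed
  then show ?thesis by simp
qed

section \<open>Markov's inequality for products of independent factors\<close>

lemma nn_integral_PiM_prod:
  fixes M :: "'a measure" and g :: "nat \<Rightarrow> 'a \<Rightarrow> real"
  assumes M: "prob_space M"
    and g_int: "\<And>j. j < n \<Longrightarrow> integrable M (g j)"
    and g_nonneg: "\<And>j z. j < n \<Longrightarrow> z \<in> space M \<Longrightarrow> 0 \<le> g j z"
  shows "(\<integral>\<^sup>+T. ennreal (\<Prod>j<n. g j (T j)) \<partial>PiM {..<n} (\<lambda>_. M)) = ennreal (\<Prod>j<n. integral\<^sup>L M (g j))"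
proof -
  interpret M: prob_space M by fact
  interpret product_sigma_finite "\<lambda>_::nat. M" by standard
  have [measurable]: "j < n \<Longrightarrow> g j \<in> borel_measurable M" for j
    using g_int by (rule borel_measurable_integrable)
  have "(\<integral>\<^sup>+T. ennreal (\<Prod>j<n. g j (T j)) \<partial>PiM {..<n} (\<lambda>_. M))
      = (\<integral>\<^sup>+T. (\<Prod>j<n. ennreal (g j (T j))) \<partial>PiM {..<n} (\<lambda>_. M))"
    by (intro nn_integral_cong prod_ennreal[symmetric]) (auto simp: space_PiM PiE_def Pi_iff g_nonneg)
  also have "\<dots> = (\<Prod>j<n. \<integral>\<^sup>+z. ennreal (g j z) \<partial>M)"
    by (rule product_nn_integral_prod) auto
  also have "\<dots> = (\<Prod>j<n. ennreal (integral\<^sup>L M (g j)))"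
    by (intro prod.cong refl nn_integral_eq_integral) (auto simp: g_int g_nonneg intro!: AE_I2)
  also have "\<dots> = ennreal (\<Prod>j<n. integral\<^sup>L M (g j))"
    by (intro prod_ennreal integral_nonneg_AE AE_I2) (simp add: g_nonneg)
  finally show ?thesis .
qed

lemma measure_PiM_le_prod_integral:
  fixes M :: "'a measure" and g :: "nat \<Rightarrow> 'a \<Rightarrow> real"
  assumes M: "prob_space M"
    and A: "A \<in> sets (PiM {..<n} (\<lambda>_. M))"
    and g_int: "\<And>j. j < n \<Longrightarrow> integrable M (g j)"
    and g_nonneg: "\<And>j z. j < n \<Longrightarrow> z \<in> space M \<Longrightarrow> 0 \<le> g j z"
    and a: "0 < a" and a_le: "\<And>T. T \<in> A \<Longrightarrow> a \<le> (\<Prod>j<n. g j (T j))"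
  shows "measure (PiM {..<n} (\<lambda>_. M)) A \<le> (\<Prod>j<n. integral\<^sup>L M (g j)) / a"
proof -
  let ?P = "PiM {..<n} (\<lambda>_. M)"
  interpret P: prob_space ?P by (rule prob_space_PiM) (rule M)
  have [measurable]: "j < n \<Longrightarrow> g j \<in> borel_measurable M" for j
    using g_int by (rule borel_measurable_integrable)
  have bound_nonneg: "0 \<le> (\<Prod>j<n. integral\<^sup>L M (g j)) / a"
    using a g_nonneg by (auto intro!: divide_nonneg_pos prod_nonneg integral_nonneg_AE AE_I2)
  have "emeasure ?P A = (\<integral>\<^sup>+T. indicator A T \<partial>?P)"
    using A by simp
  also have "\<dots> \<le> (\<integral>\<^sup>+T. ennreal (\<Prod>j<n. g j (T j)) * ennreal (1 / a) \<partial>?P)"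
  proof (intro nn_integral_mono)
    fix T
    show "indicator A T \<le> ennreal (\<Prod>j<n. g j (T j)) * ennreal (1 / a)"
    proof (cases "T \<in> A")
      case True
      then have "indicator A T = ennreal 1"
        by simp
      also have "\<dots> \<le> ennreal ((\<Prod>j<n. g j (T j)) * (1 / a))"
        using a_le[OF True] a by (intro ennreal_leI) simp
      also have "\<dots> = ennreal (\<Prod>j<n. g j (T j)) * ennreal (1 / a)"
        using a by (intro ennreal_mult'') simp
      finally show ?thesis .
    qed simp
  qed
  also have "\<dots> = ennreal ((\<Prod>j<n. integral\<^sup>L M (g j)) / a)"
    using a g_nonneg
    by (simp add: nn_integral_multc nn_integral_PiM_prod[OF M g_int] ennreal_mult'' divide_inverse
        prod_nonneg integral_nonneg_AE AE_I2)
  finally show ?thesis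
    using bound_nonneg by (simp add: P.emeasure_eq_measure ennreal_le_iff)
qed

section \<open>Counts and sums over an i.i.d. sample\<close>

definition sample_count :: "'a set \<Rightarrow> nat \<Rightarrow> (nat \<Rightarrow> 'a) \<Rightarrow> real" where
  "sample_count A n T = (\<Sum>j<n. indicator A (T j))"

definition sample_sum :: "'a set \<Rightarrow> ('a \<Rightarrow> real) \<Rightarrow> nat \<Rightarrow> (nat \<Rightarrow> 'a) \<Rightarrow> real" where
  "sample_sum A X n T = (\<Sum>j<n. indicator A (T j) * X (T j))"

(* E[X | A]; the junk value 0 is taken when A is a null set. *)
definition cond_mean :: "'a measure \<Rightarrow> 'a set \<Rightarrow> ('a \<Rightarrow> real) \<Rightarrow> real" where
  "cond_mean M A X = (LINT z:A|M. X z) / measure M A"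

lemma sample_count_nonneg: "0 \<le> sample_count A n T"
  unfolding sample_count_def by (intro sum_nonneg) simp

lemma sample_sum_eq_0_if_count_eq_0:
  assumes "sample_count A n T = 0"
  shows "sample_sum A X n T = 0"
proof -
  have "\<forall>j\<in>{..<n}. indicator A (T j) = (0::real)"
    using assms unfolding sample_count_def by (subst sum_nonneg_eq_0_iff[symmetric]) auto
  then show ?thesis
    unfolding sample_sum_def by simp
qed

lemma sum_indicator_affine:
  "(\<Sum>j<n. indicator A (T j) * (a + b * X (T j))) = a * sample_count A n T + b * sample_sum A X n T"
  unfolding sample_count_def sample_sum_def sum_distrib_left sum.distrib[symmetric]
  by (intro sum.cong) (simp_all add: algebra_simps)

lemma sample_count_eq_card: "sample_count A n T = real (card {j. j < n \<and> T j \<in> A})"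
proof -
  have "sample_count A n T = (\<Sum>j\<in>{..<n} \<inter> {j. T j \<in> A}. 1)"
    unfolding sample_count_def indicator_def by (simp add: sum.If_cases)
  also have "{..<n} \<inter> {j. T j \<in> A} = {j. j < n \<and> T j \<in> A}"
    by auto
  finally show ?thesis
    by simp
qed

lemma sample_sum_eq_sum: "sample_sum A X n T = (\<Sum>j | j < n \<and> T j \<in> A. X (T j))"
proof -
  have "sample_sum A X n T = (\<Sum>j\<in>{..<n} \<inter> {j. T j \<in> A}. X (T j))"
    unfolding sample_sum_def indicator_def by (simp add: sum.If_cases)
  also have "{..<n} \<inter> {j. T j \<in> A} = {j. j < n \<and> T j \<in> A}"
    by auto
  finally show ?thesis .
qed

lemma measurable_sample_count [measurable]:
  assumes [measurable]: "A \<in> sets M"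
  shows "sample_count A n \<in> borel_measurable (PiM {..<n} (\<lambda>_. M))"
  unfolding sample_count_def by measurable

lemma measurable_sample_sum [measurable]:
  assumes [measurable]: "A \<in> sets M" "X \<in> borel_measurable M"
  shows "sample_sum A X n \<in> borel_measurable (PiM {..<n} (\<lambda>_. M))"
  unfolding sample_sum_def by measurable

context prob_space
begin

lemma prob_sample_count_tail_le:
  assumes A: "A \<in> sets M"
  shows "measure (PiM {..<n} (\<lambda>_. M)) {T \<in> space (PiM {..<n} (\<lambda>_. M)). a \<le> \<theta> * sample_count A n T}
           \<le> exp (n * prob A * (exp \<theta> - 1) - a)"
proof -
  define g where "g z = exp (\<theta> * indicator A z)" for z
  have "integral\<^sup>L M g = (\<integral>z. 1 + (exp \<theta> - 1) * indicator A z \<partial>M)"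
    unfolding g_def by (intro Bochner_Integration.integral_cong) (auto split: split_indicator)
  also have "\<dots> = 1 + (exp \<theta> - 1) * prob A"
    using A by (subst Bochner_Integration.integral_add) (auto simp: prob_space less_top[symmetric])
  finally have integral_g: "integral\<^sup>L M g = 1 + (exp \<theta> - 1) * prob A" .
  have "measure (PiM {..<n} (\<lambda>_. M)) {T \<in> space (PiM {..<n} (\<lambda>_. M)). a \<le> \<theta> * sample_count A n T}
      \<le> (\<Prod>j<n. integral\<^sup>L M g) / exp a"
  proof (rule measure_PiM_le_prod_integral[OF prob_space_axioms])
    show "integrable M g"
      unfolding g_def using A
      by (intro integrable_const_bound[where B="exp \<bar>\<theta>\<bar>"]) (auto split: split_indicator)
    fix T assume "T \<in> {T \<in> space (PiM {..<n} (\<lambda>_. M)). a \<le> \<theta> * sample_count A n T}"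
    moreover have "(\<Prod>j<n. g (T j)) = exp (\<theta> * sample_count A n T)"
      unfolding g_def sample_count_def sum_distrib_left by (rule exp_sum[symmetric]) simp
    ultimately show "exp a \<le> (\<Prod>j<n. g (T j))"
      by simp
  qed (use A in \<open>auto simp: g_def\<close>)
  also have "\<dots> = (1 + (exp \<theta> - 1) * prob A) ^ n / exp a"
    by (simp add: integral_g)
  also have "\<dots> \<le> exp ((exp \<theta> - 1) * prob A) ^ n / exp a"
  proof -
    have "0 \<le> (1 - prob A) + exp \<theta> * prob A"
      using prob_le_1[of A] by (intro add_nonneg_nonneg mult_nonneg_nonneg) auto
    then have "0 \<le> 1 + (exp \<theta> - 1) * prob A"
      by (simp add: algebra_simps)
    then show ?thesis
      by (intro divide_right_mono power_mono exp_ge_add_one_self) auto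
  qed
  also have "\<dots> = exp (n * prob A * (exp \<theta> - 1) - a)"
    by (simp only: exp_diff exp_of_nat_mult[symmetric]) (simp add: algebra_simps)
  finally show ?thesis .
qed

lemma chernoff_upper_sample_count:
  assumes A: "A \<in> sets M" and q: "0 < n * prob A" and d: "0 \<le> d" "4 * d \<le> 3 * (n * prob A)"
  shows "measure (PiM {..<n} (\<lambda>_. M)) {T \<in> space (PiM {..<n} (\<lambda>_. M)). n * prob A + d \<le> sample_count A n T}
         \<le> exp (- d\<^sup>2 / (3 * (n * prob A)))"
proof -
  let ?P = "PiM {..<n} (\<lambda>_. M)"
  interpret P: prob_space ?P by (rule prob_space_PiM) (rule prob_space_axioms)
  define q where "q = n * prob A"
  have q_pos: "0 < q"
    using q by (simp add: q_def)
  define \<theta> where "\<theta> = 2 * d / (3 * q)"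
  have \<theta>: "0 \<le> \<theta>" "\<theta> \<le> 1/2"
    using q d by (simp_all add: \<theta>_def q_def)
  have "measure ?P {T \<in> space ?P. q + d \<le> sample_count A n T}
      \<le> measure ?P {T \<in> space ?P. \<theta> * (q + d) \<le> \<theta> * sample_count A n T}"
    using A \<theta>(1) by (intro P.finite_measure_mono) (auto intro: mult_left_mono)
  also have "\<dots> \<le> exp (q * (exp \<theta> - 1) - \<theta> * (q + d))"
    unfolding q_def by (rule prob_sample_count_tail_le[OF A])
  also have "\<dots> \<le> exp (q * (\<theta> + 3/4 * \<theta>\<^sup>2) - \<theta> * (q + d))"
    using exp_le_quadratic[OF \<theta>] q_pos by simp
  also have "q * (\<theta> + 3/4 * \<theta>\<^sup>2) - \<theta> * (q + d) = - d\<^sup>2 / (3 * q)"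
    using q by (simp add: \<theta>_def q_def field_simps power2_eq_square)
  finally show ?thesis
    by (simp add: q_def)
qed

lemma chernoff_lower_sample_count:
  assumes A: "A \<in> sets M" and q: "0 < n * prob A" and d: "0 \<le> d"
  shows "measure (PiM {..<n} (\<lambda>_. M)) {T \<in> space (PiM {..<n} (\<lambda>_. M)). sample_count A n T \<le> n * prob A - d}
         \<le> exp (- d\<^sup>2 / (2 * (n * prob A)))"
proof -
  let ?P = "PiM {..<n} (\<lambda>_. M)"
  interpret P: prob_space ?P by (rule prob_space_PiM) (rule prob_space_axioms)
  define q where "q = n * prob A"
  have q_pos: "0 < q"
    using q by (simp add: q_def)
  define \<eta> where "\<eta> = d / q"
  have \<eta>: "0 \<le> \<eta>"
    using q d by (simp add: \<eta>_def q_def)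
  have "measure ?P {T \<in> space ?P. sample_count A n T \<le> q - d}
      \<le> measure ?P {T \<in> space ?P. - \<eta> * (q - d) \<le> (- \<eta>) * sample_count A n T}"
    using A \<eta> by (intro P.finite_measure_mono) (auto intro: mult_left_mono)
  also have "\<dots> \<le> exp (q * (exp (- \<eta>) - 1) - (- \<eta> * (q - d)))"
    unfolding q_def by (rule prob_sample_count_tail_le[OF A])
  also have "\<dots> \<le> exp (q * (- \<eta> + \<eta>\<^sup>2 / 2) - (- \<eta> * (q - d)))"
    using exp_minus_le_quadratic[OF \<eta>] q_pos by simp
  also have "q * (- \<eta> + \<eta>\<^sup>2 / 2) - (- \<eta> * (q - d)) = - d\<^sup>2 / (2 * q)"
    using q by (simp add: \<eta>_def q_def field_simps power2_eq_square)
  finally show ?thesis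
    by (simp add: q_def)
qed

lemma chernoff_sample_count:
  assumes A: "A \<in> sets M" and L: "0 < L" "12 * L < n * prob A"
  shows "measure (PiM {..<n} (\<lambda>_. M))
           {T \<in> space (PiM {..<n} (\<lambda>_. M)). sqrt (3 * n * prob A * L) \<le> \<bar>sample_count A n T - n * prob A\<bar>}
         \<le> 2 * exp (- L)"
proof -
  let ?P = "PiM {..<n} (\<lambda>_. M)"
  interpret P: prob_space ?P by (rule prob_space_PiM) (rule prob_space_axioms)
  define q where "q = n * prob A"
  define d where "d = sqrt (3 * q * L)"
  have q: "0 < q" and qL: "12 * L < q"
    using L by (simp_all add: q_def)
  have d: "0 \<le> d" "d\<^sup>2 = 3 * q * L"
    using q L by (simp_all add: d_def)
  have "(4 * d)\<^sup>2 = q * (48 * L)"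
    using d(2) by (simp add: power_mult_distrib)
  also have "\<dots> \<le> q * (9 * q)"
    by (rule mult_left_mono) (use qL L q in auto)
  also have "\<dots> = (3 * q)\<^sup>2"
    by (simp add: power2_eq_square)
  finally have "4 * d \<le> 3 * q"
    by (rule power2_le_imp_le) (use q in auto)
  then have "measure ?P {T \<in> space ?P. q + d \<le> sample_count A n T} \<le> exp (- d\<^sup>2 / (3 * q))"
    using chernoff_upper_sample_count[OF A q[unfolded q_def] d(1), folded q_def] by simp
  also have "- d\<^sup>2 / (3 * q) = - L"
    using q d(2) by simp
  finally have upper: "measure ?P {T \<in> space ?P. q + d \<le> sample_count A n T} \<le> exp (- L)" .
  have "measure ?P {T \<in> space ?P. sample_count A n T \<le> q - d} \<le> exp (- d\<^sup>2 / (2 * q))"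
    using chernoff_lower_sample_count[OF A q[unfolded q_def] d(1), folded q_def] .
  also have "\<dots> \<le> exp (- L)"
    using q d(2) L by simp
  finally have lower: "measure ?P {T \<in> space ?P. sample_count A n T \<le> q - d} \<le> exp (- L)" .
  have "measure ?P {T \<in> space ?P. d \<le> \<bar>sample_count A n T - q\<bar>}
      \<le> measure ?P ({T \<in> space ?P. q + d \<le> sample_count A n T} \<union> {T \<in> space ?P. sample_count A n T \<le> q - d})"
    using A by (intro P.finite_measure_mono) auto
  also have "\<dots> \<le> measure ?P {T \<in> space ?P. q + d \<le> sample_count A n T}
      + measure ?P {T \<in> space ?P. sample_count A n T \<le> q - d}"
    using A by (intro measure_Un_le) auto
  finally show ?thesis
    using upper lower by (simp add: d_def q_def mult.assoc)
qed

context
  fixes A :: "'a set" and X :: "'a \<Rightarrow> real"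
  assumes A [measurable]: "A \<in> events" and X [measurable]: "X \<in> borel_measurable M"
    and X_unit: "AE z in M. 0 \<le> X z \<and> X z \<le> 1"
begin

lemma integrable_indicator_mult: "integrable M (\<lambda>z. indicator A z * X z)"
  by (rule integrable_const_bound[where B=1])
     (auto intro: eventually_mono[OF X_unit] split: split_indicator)

lemma integrable_indicator_mult_exp: "integrable M (\<lambda>z. indicator A z * exp (\<theta> * (c - X z)))"
proof (rule integrable_const_bound[where B="exp (\<bar>\<theta>\<bar> * (\<bar>c\<bar> + 1))"])
  show "AE z in M. norm (indicator A z * exp (\<theta> * (c - X z))) \<le> exp (\<bar>\<theta>\<bar> * (\<bar>c\<bar> + 1))"
  proof (rule eventually_mono[OF X_unit])
    fix z assume z: "0 \<le> X z \<and> X z \<le> 1"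
    have "\<theta> * (c - X z) \<le> \<bar>\<theta>\<bar> * \<bar>c - X z\<bar>"
      by (metis abs_ge_self abs_mult)
    also have "\<dots> \<le> \<bar>\<theta>\<bar> * (\<bar>c\<bar> + 1)"
      using z by (intro mult_left_mono) auto
    finally show "norm (indicator A z * exp (\<theta> * (c - X z))) \<le> exp (\<bar>\<theta>\<bar> * (\<bar>c\<bar> + 1))"
      by (auto split: split_indicator)
  qed
qed measurable

lemma integral_indicator_mult_eq_cond_mean:
  assumes "0 < prob A"
  shows "(\<integral>z. indicator A z * X z \<partial>M) = prob A * cond_mean M A X"
  using assms by (simp add: cond_mean_def set_lebesgue_integral_def)

lemma cond_mean_bounds: "0 \<le> cond_mean M A X" "cond_mean M A X \<le> 1"
proof -
  have "0 \<le> (\<integral>z. indicator A z * X z \<partial>M)"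
    by (rule integral_nonneg_AE) (auto intro: eventually_mono[OF X_unit] split: split_indicator)
  moreover have "(\<integral>z. indicator A z * X z \<partial>M) \<le> (\<integral>z. indicator A z \<partial>M)"
    by (rule integral_mono_AE)
       (auto intro: integrable_indicator_mult eventually_mono[OF X_unit]
         simp: less_top[symmetric] split: split_indicator)
  ultimately show "0 \<le> cond_mean M A X" "cond_mean M A X \<le> 1"
    by (auto simp: cond_mean_def set_lebesgue_integral_def divide_le_eq_1)
qed

lemma integral_indicator_exp_le:
  assumes q: "0 < prob A"
  shows "(\<integral>z. indicator A z * exp (\<theta> * (cond_mean M A X - X z)) \<partial>M) \<le> prob A * exp (\<theta>\<^sup>2 / 8)"
proof -
  define y where "y = cond_mean M A X"
  define a where "a = exp (\<theta> * y)"
  define b where "b = exp (\<theta> * (y - 1))"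
  have "(\<integral>z. indicator A z * exp (\<theta> * (y - X z)) \<partial>M)
      \<le> (\<integral>z. a * indicator A z - a * (indicator A z * X z) + b * (indicator A z * X z) \<partial>M)"
  proof (rule integral_mono_AE)
    show "AE z in M. indicator A z * exp (\<theta> * (y - X z))
        \<le> a * indicator A z - a * (indicator A z * X z) + b * (indicator A z * X z)"
    proof (rule eventually_mono[OF X_unit])
      fix z assume z: "0 \<le> X z \<and> X z \<le> 1"
      \<comment> \<open>convexity of exp on the segment between the exponents for labels 0 and 1\<close>
      have "exp ((1 - X z) *\<^sub>R (\<theta> * y) + X z *\<^sub>R (\<theta> * (y - 1)))
          \<le> (1 - X z) * exp (\<theta> * y) + X z * exp (\<theta> * (y - 1))"
        using z by (intro convex_onD[OF exp_convex]) auto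
      moreover have "(1 - X z) *\<^sub>R (\<theta> * y) + X z *\<^sub>R (\<theta> * (y - 1)) = \<theta> * (y - X z)"
        by (simp add: algebra_simps)
      ultimately show "indicator A z * exp (\<theta> * (y - X z))
          \<le> a * indicator A z - a * (indicator A z * X z) + b * (indicator A z * X z)"
        by (auto split: split_indicator simp: a_def b_def algebra_simps)
    qed
  qed (auto intro!: integrable_indicator_mult_exp integrable_indicator_mult
      Bochner_Integration.integrable_add Bochner_Integration.integrable_diff integrable_mult_right
      simp: less_top[symmetric])
  also have "\<dots> = a * prob A - a * (prob A * y) + b * (prob A * y)"
    using integrable_indicator_mult integral_indicator_mult_eq_cond_mean[OF q]
    by (simp add: y_def less_top[symmetric])
  also have "\<dots> = prob A * ((1 - y) * exp (- (- \<theta>) * y) + y * exp ((- \<theta>) * (1 - y)))"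
    by (simp add: a_def b_def algebra_simps)
  also have "\<dots> \<le> prob A * exp ((- \<theta>)\<^sup>2 / 8)"
    using cond_mean_bounds by (intro mult_left_mono bernoulli_mgf_le) (auto simp: y_def)
  finally show ?thesis
    by (simp add: y_def)
qed

definition deviation_pattern :: "nat \<Rightarrow> real \<Rightarrow> nat set \<Rightarrow> real \<Rightarrow> (nat \<Rightarrow> 'a) set" where
  "deviation_pattern n L J \<sigma> = {T \<in> space (PiM {..<n} (\<lambda>_. M)). (\<forall>j\<in>{..<n}. T j \<in> A \<longleftrightarrow> j \<in> J) \<and>
      sqrt (sample_count A n T * L / 2) \<le> \<sigma> * (sample_count A n T * cond_mean M A X - sample_sum A X n T)}"

lemma sets_deviation_pattern: "deviation_pattern n L J \<sigma> \<in> sets (PiM {..<n} (\<lambda>_. M))"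
  unfolding deviation_pattern_def
proof (rule sets.sets_Collect_conj)
  show "{T \<in> space (PiM {..<n} (\<lambda>_. M)). \<forall>j\<in>{..<n}. T j \<in> A \<longleftrightarrow> j \<in> J} \<in> sets (PiM {..<n} (\<lambda>_. M))"
    by measurable
  show "{T \<in> space (PiM {..<n} (\<lambda>_. M)). sqrt (sample_count A n T * L / 2)
      \<le> \<sigma> * (sample_count A n T * cond_mean M A X - sample_sum A X n T)} \<in> sets (PiM {..<n} (\<lambda>_. M))"
    by (intro borel_measurable_le) measurable
qed

(* On a sample whose indices in A are exactly J, the product of these factors over the sample is
   exp (\<mu> * (|J| E[X | A] - sum of X over J)), while its expectation is the probability of that
   pattern times exp (|J| \<mu>^2 / 8). *)
definition pattern_factor :: "nat set \<Rightarrow> real \<Rightarrow> nat \<Rightarrow> 'a \<Rightarrow> real" where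
  "pattern_factor J \<mu> j z =
     (if j \<in> J then indicator A z * exp (\<mu> * (cond_mean M A X - X z)) else 1 - indicator A z)"

lemma pattern_factor_nonneg: "0 \<le> pattern_factor J \<mu> j z"
  by (auto simp: pattern_factor_def split: split_indicator)

lemma integrable_pattern_factor: "integrable M (pattern_factor J \<mu> j)"
  by (cases "j \<in> J")
     (auto simp: pattern_factor_def[abs_def] integrable_indicator_mult_exp less_top[symmetric])

lemma prod_integral_pattern_factor_le:
  assumes q: "0 < prob A" and J: "J \<subseteq> {..<n}"
  shows "(\<Prod>j<n. integral\<^sup>L M (pattern_factor J \<mu> j))
    \<le> exp (card J * (\<mu>\<^sup>2 / 8)) * ((\<Prod>j\<in>J. prob A) * (\<Prod>j\<in>{..<n} - J. 1 - prob A))"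
proof -
  have nonneg: "0 \<le> integral\<^sup>L M (pattern_factor J \<mu> j)" for j
    by (intro integral_nonneg_AE AE_I2) (simp add: pattern_factor_nonneg)
  have inside: "integral\<^sup>L M (pattern_factor J \<mu> j) \<le> prob A * exp (\<mu>\<^sup>2 / 8)" if "j \<in> J" for j
    using that integral_indicator_exp_le[OF q] by (simp add: pattern_factor_def[abs_def])
  have outside: "integral\<^sup>L M (pattern_factor J \<mu> j) = 1 - prob A" if "j \<notin> J" for j
    using that
    by (simp add: pattern_factor_def[abs_def] Bochner_Integration.integral_diff prob_space less_top[symmetric])
  have "(\<Prod>j<n. integral\<^sup>L M (pattern_factor J \<mu> j))
      = (\<Prod>j\<in>J. integral\<^sup>L M (pattern_factor J \<mu> j)) * (\<Prod>j\<in>{..<n} - J. integral\<^sup>L M (pattern_factor J \<mu> j))"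
    using prod.subset_diff[OF J] by (simp add: mult.commute)
  also have "\<dots> \<le> (\<Prod>j\<in>J. prob A * exp (\<mu>\<^sup>2 / 8)) * (\<Prod>j\<in>{..<n} - J. 1 - prob A)"
    by (intro mult_mono prod_mono prod_nonneg conjI) (simp_all add: nonneg inside outside prob_le_1)
  also have "(\<Prod>j\<in>J. prob A * exp (\<mu>\<^sup>2 / 8)) = exp (card J * (\<mu>\<^sup>2 / 8)) * (\<Prod>j\<in>J. prob A)"
    unfolding exp_of_nat_mult by (simp add: power_mult_distrib mult.commute)
  finally show ?thesis
    by (simp add: mult.assoc)
qed

lemma prod_pattern_factor:
  assumes J: "J \<subseteq> {..<n}" and pattern: "\<And>j. j < n \<Longrightarrow> T j \<in> A \<longleftrightarrow> j \<in> J"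
  shows "(\<Prod>j<n. pattern_factor J \<mu> j (T j))
    = exp (\<mu> * (sample_count A n T * cond_mean M A X - sample_sum A X n T))"
proof -
  have finJ: "finite J"
    using J finite_subset by blast
  have "{j. j < n \<and> T j \<in> A} = J"
    using J pattern by auto
  then have count: "sample_count A n T = card J" and sum: "sample_sum A X n T = (\<Sum>j\<in>J. X (T j))"
    by (simp_all add: sample_count_eq_card sample_sum_eq_sum)
  have "(\<Prod>j<n. pattern_factor J \<mu> j (T j))
      = (\<Prod>j\<in>J. pattern_factor J \<mu> j (T j)) * (\<Prod>j\<in>{..<n} - J. pattern_factor J \<mu> j (T j))"
    using prod.subset_diff[OF J] by (simp add: mult.commute)
  also have "(\<Prod>j\<in>{..<n} - J. pattern_factor J \<mu> j (T j)) = 1"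
    using pattern by (intro prod.neutral) (auto simp: pattern_factor_def)
  also have "(\<Prod>j\<in>J. pattern_factor J \<mu> j (T j)) = (\<Prod>j\<in>J. exp (\<mu> * (cond_mean M A X - X (T j))))"
    using pattern J by (intro prod.cong) (auto simp: pattern_factor_def)
  also have "\<dots> = exp (\<Sum>j\<in>J. \<mu> * (cond_mean M A X - X (T j)))"
    by (rule exp_sum[OF finJ, symmetric])
  finally show ?thesis
    by (simp add: count sum sum_distrib_left[symmetric] sum_subtractf)
qed

lemma prob_deviation_pattern_le:
  assumes q: "0 < prob A" and L: "0 < L" and J: "J \<subseteq> {..<n}" "J \<noteq> {}" and \<sigma>: "\<bar>\<sigma>\<bar> = 1"
  shows "measure (PiM {..<n} (\<lambda>_. M)) (deviation_pattern n L J \<sigma>)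
    \<le> exp (- L) * ((\<Prod>j\<in>J. prob A) * (\<Prod>j\<in>{..<n} - J. 1 - prob A))"
    (is "measure ?P ?E \<le> _ * ?w")
proof -
  define k where "k = real (card J)"
  define r where "r = sqrt (k * L / 2)"
  define \<mu> where "\<mu> = \<sigma> * 4 * r / k"
  have k: "0 < k"
    using J finite_subset[OF J(1)] by (simp add: k_def card_gt_0_iff)
  have r: "0 \<le> r" "r\<^sup>2 = k * L / 2"
    using k L by (simp_all add: r_def)
  have "measure ?P ?E \<le> (\<Prod>j<n. integral\<^sup>L M (pattern_factor J \<mu> j)) / exp (2 * L)"
  proof (rule measure_PiM_le_prod_integral[OF prob_space_axioms])
    show "?E \<in> sets ?P"
      by (rule sets_deviation_pattern)
    fix T assume T: "T \<in> ?E"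
    then have "sample_count A n T = k"
      using J(1)
      by (auto simp: deviation_pattern_def sample_count_eq_card k_def intro!: arg_cong[where f=card])
    with T have deviation: "r \<le> \<sigma> * (sample_count A n T * cond_mean M A X - sample_sum A X n T)"
      by (simp add: r_def deviation_pattern_def)
    have "2 * L = 4 * r / k * r"
      using k r(2) by (simp add: power2_eq_square field_simps)
    also have "\<dots> \<le> 4 * r / k * (\<sigma> * (sample_count A n T * cond_mean M A X - sample_sum A X n T))"
      by (rule mult_left_mono[OF deviation]) (use r(1) k in auto)
    also have "\<dots> = \<mu> * (sample_count A n T * cond_mean M A X - sample_sum A X n T)"
      by (simp add: \<mu>_def)
    finally show "exp (2 * L) \<le> (\<Prod>j<n. pattern_factor J \<mu> j (T j))"
      using T by (simp add: prod_pattern_factor[OF J(1)] deviation_pattern_def)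
  qed (simp_all add: integrable_pattern_factor pattern_factor_nonneg)
  also have "\<dots> \<le> exp (card J * (\<mu>\<^sup>2 / 8)) * ?w / exp (2 * L)"
    by (intro divide_right_mono prod_integral_pattern_factor_le[OF q J(1)]) simp
  also have "card J * (\<mu>\<^sup>2 / 8) = L"
    using k r(2) abs_mult_self_eq[of \<sigma>] \<sigma>
    by (simp add: k_def[symmetric] \<mu>_def power_mult_distrib power_divide power2_eq_square field_simps)
  also have "exp L * ?w / exp (2 * L) = exp (- L) * ?w"
    by (simp add: exp_minus field_simps flip: exp_add)
  finally show ?thesis .
qed

lemma deviation_subset_patterns:
  "{T \<in> space (PiM {..<n} (\<lambda>_. M)).
      L / 2 * sample_count A n T < (sample_count A n T * cond_mean M A X - sample_sum A X n T)\<^sup>2}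
    \<subseteq> (\<Union>J\<in>Pow {..<n} - {{}}. deviation_pattern n L J 1 \<union> deviation_pattern n L J (- 1))"
proof
  fix T assume T: "T \<in> {T \<in> space (PiM {..<n} (\<lambda>_. M)).
      L / 2 * sample_count A n T < (sample_count A n T * cond_mean M A X - sample_sum A X n T)\<^sup>2}"
  define J where "J = {j. j < n \<and> T j \<in> A}"
  define d where "d = sample_count A n T * cond_mean M A X - sample_sum A X n T"
  have "sample_count A n T \<noteq> 0"
    using T sample_sum_eq_0_if_count_eq_0[of A n T X] by auto
  then have J: "J \<in> Pow {..<n} - {{}}"
    by (auto simp: J_def sample_count_eq_card)
  have "sqrt (sample_count A n T * L / 2) < sqrt (d\<^sup>2)"
    using T by (intro real_sqrt_less_mono) (simp add: d_def algebra_simps)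
  then have "sqrt (sample_count A n T * L / 2) \<le> 1 * d \<or> sqrt (sample_count A n T * L / 2) \<le> (- 1) * d"
    by auto
  then have "T \<in> deviation_pattern n L J 1 \<union> deviation_pattern n L J (- 1)"
    using T by (auto simp: deviation_pattern_def J_def d_def)
  with J show "T \<in> (\<Union>J\<in>Pow {..<n} - {{}}. deviation_pattern n L J 1 \<union> deviation_pattern n L J (- 1))"
    by blast
qed

lemma conditional_hoeffding_sample_sum:
  assumes q: "0 < prob A" and L: "0 < L"
  shows "measure (PiM {..<n} (\<lambda>_. M))
      {T \<in> space (PiM {..<n} (\<lambda>_. M)).
         L / 2 * sample_count A n T < (sample_count A n T * cond_mean M A X - sample_sum A X n T)\<^sup>2}
    \<le> 2 * exp (- L)"
proof -
  let ?P = "PiM {..<n} (\<lambda>_. M)"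
  let ?E = "\<lambda>J. deviation_pattern n L J 1 \<union> deviation_pattern n L J (- 1)"
  interpret P: prob_space ?P
    by (rule prob_space_PiM) (rule prob_space_axioms)
  define w where "w J = (\<Prod>j\<in>J. prob A) * (\<Prod>j\<in>{..<n} - J. 1 - prob A)" for J
  have "measure ?P {T \<in> space ?P.
      L / 2 * sample_count A n T < (sample_count A n T * cond_mean M A X - sample_sum A X n T)\<^sup>2}
      \<le> measure ?P (\<Union>J\<in>Pow {..<n} - {{}}. ?E J)"
    by (intro P.finite_measure_mono deviation_subset_patterns) (auto intro: sets_deviation_pattern)
  also have "\<dots> \<le> (\<Sum>J\<in>Pow {..<n} - {{}}. measure ?P (?E J))"
    by (intro measure_UNION_le) (auto intro: sets_deviation_pattern)
  also have "\<dots> \<le> (\<Sum>J\<in>Pow {..<n} - {{}}. 2 * exp (- L) * w J)"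
  proof (rule sum_mono)
    fix J assume J: "J \<in> Pow {..<n} - {{}}"
    have "measure ?P (?E J) \<le> measure ?P (deviation_pattern n L J 1) + measure ?P (deviation_pattern n L J (- 1))"
      by (intro measure_Un_le sets_deviation_pattern)
    also have "\<dots> \<le> exp (- L) * w J + exp (- L) * w J"
      using J unfolding w_def by (intro add_mono prob_deviation_pattern_le[OF q L]) auto
    finally show "measure ?P (?E J) \<le> 2 * exp (- L) * w J"
      by (simp add: mult_ac)
  qed
  also have "\<dots> \<le> (\<Sum>J\<in>Pow {..<n}. 2 * exp (- L) * w J)"
    by (intro sum_mono2) (auto simp: w_def prob_le_1 intro!: prod_nonneg)
  also have "\<dots> = 2 * exp (- L) * (\<Prod>j<n. prob A + (1 - prob A))"
    by (simp only: w_def sum_distrib_left[symmetric] prod_add[OF finite_lessThan])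
  finally show ?thesis
    by simp
qed

end

end

section \<open>The calibration setting\<close>

(* In the notation of the paper: p i = p_i, y i = y*_i, cnt i = n hat p_i, and lsum i is the sum of
   the labels in bin i, so that lsum i / cnt i = hat y_i. *)
locale calibration_setting =
  fixes Mx :: "'x measure" and D :: "('x \<times> real) measure"
    and f :: "'x \<Rightarrow> real" and s :: "nat \<Rightarrow> real" and B n :: nat and \<delta> :: real
  assumes prob_space_D: "prob_space D"
    and sets_D: "sets D = sets (Mx \<Otimes>\<^sub>M borel)"
    and labels_binary: "AE z in D. snd z \<in> {0, 1}"
    and f_measurable: "f \<in> borel_measurable Mx"
    and f_range: "\<And>x. x \<in> space Mx \<Longrightarrow> f x \<in> s ` {..<B}"
    and s_inj: "inj_on s {..<B}"
    and n_pos: "0 < n"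
    and \<delta>_pos: "0 < \<delta>" and \<delta>_less_1: "\<delta> < 1"
    and bins_large: "\<And>i. i < B \<Longrightarrow> cal_p D f s i > 12 / real n * ln (2 * real B / \<delta>)"
begin

sublocale D: prob_space D
  by (rule prob_space_D)

abbreviation "P \<equiv> PiM {..<n} (\<lambda>_. D)"

sublocale P: prob_space P
  by (rule prob_space_PiM) (rule prob_space_D)

definition "bin i = {z \<in> space D. f (fst z) = s i}"

abbreviation "p \<equiv> cal_p D f s"
abbreviation "y \<equiv> cal_ystar D f s"
abbreviation "cnt i \<equiv> sample_count (bin i) n"
abbreviation "lsum i \<equiv> sample_sum (bin i) snd n"

definition "L = ln (2 * real B / \<delta>)"

lemma measurable_fst [measurable]: "fst \<in> measurable D Mx"
  by (simp add: measurable_cong_sets[OF sets_D refl])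

lemma measurable_snd [measurable]: "snd \<in> borel_measurable D"
  by (simp add: measurable_cong_sets[OF sets_D refl])

lemma sets_bin [measurable]: "bin i \<in> sets D"
proof -
  have [measurable]: "f \<in> borel_measurable Mx"
    by (rule f_measurable)
  show ?thesis
    unfolding bin_def by measurable
qed

lemma p_eq: "p i = D.prob (bin i)"
  by (simp add: cal_p_def bin_def)

lemma y_eq: "y i = cond_mean D (bin i) snd"
  by (simp add: cal_ystar_def cond_mean_def cal_p_def bin_def)

lemma labels_unit: "AE z in D. 0 \<le> snd z \<and> snd z \<le> 1"
  using labels_binary by eventually_elim auto

lemma bin_cover:
  assumes "z \<in> space D"
  obtains i where "i < B" "z \<in> bin i"
proof -
  have "fst z \<in> space Mx"
    using assms sets_eq_imp_space_eq[OF sets_D] by (auto simp: space_pair_measure)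
  then obtain i where "i < B" "f (fst z) = s i"
    using f_range by blast
  then show ?thesis
    using that assms by (auto simp: bin_def)
qed

lemma bin_unique: "z \<in> bin i \<Longrightarrow> z \<in> bin i' \<Longrightarrow> i < B \<Longrightarrow> i' < B \<Longrightarrow> i = i'"
  using s_inj by (auto simp: bin_def dest: inj_onD)

lemma sum_indicator_bins:
  fixes F :: "nat \<Rightarrow> real"
  assumes "z \<in> bin i" "i < B"
  shows "(\<Sum>i'<B. indicator (bin i') z * F i') = F i"
proof -
  have "(\<Sum>i'<B. indicator (bin i') z * F i') = (\<Sum>i'<B. if i' = i then F i else 0)"
    using assms bin_unique by (intro sum.cong) (auto split: split_indicator)
  then show ?thesis
    using assms(2) by simp
qed

lemma B_pos: "0 < B"
proof -
  obtain z where "z \<in> space D"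
    using D.not_empty by blast
  then show ?thesis
    by (rule bin_cover) simp
qed

lemma L_pos: "0 < L"
proof -
  have "1 < 2 * real B / \<delta>"
    using B_pos \<delta>_pos \<delta>_less_1 by (simp add: field_simps)
  then show ?thesis
    by (simp add: L_def)
qed

lemma bin_large: "i < B \<Longrightarrow> 12 * L < n * p i"
  using bins_large[of i] n_pos by (simp add: L_def field_simps)

lemma p_pos:
  assumes "i < B"
  shows "0 < p i"
proof -
  have "0 < real n * p i"
    using bin_large[OF assms] L_pos by linarith
  then show ?thesis
    by (simp add: zero_less_mult_iff)
qed

lemma sum_p: "(\<Sum>i<B. p i) = 1"
proof -
  have "(\<Sum>i<B. p i) = D.prob (\<Union>i<B. bin i)"
    unfolding p_eq using bin_unique
    by (intro D.finite_measure_finite_Union[symmetric]) (auto simp: disjoint_family_on_def)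
  also have "(\<Union>i<B. bin i) = space D"
  proof
    show "(\<Union>i<B. bin i) \<subseteq> space D"
      by (auto simp: bin_def)
    show "space D \<subseteq> (\<Union>i<B. bin i)"
      by (auto elim: bin_cover)
  qed
  finally show ?thesis
    by (simp add: D.prob_space)
qed

lemma bin_idx_eq: "T \<in> space P \<Longrightarrow> bin_idx f s n T i = {j. j < n \<and> T j \<in> bin i}"
  by (auto simp: bin_idx_def bin_def space_PiM PiE_def Pi_iff)

definition "gap i = s i - y i"
definition "weighted_gap T = (\<Sum>i<B. cnt i T / n * (gap i)\<^sup>2)"
definition "cross_term T = (\<Sum>i<B. 2 * gap i * (cnt i T * y i - lsum i T) / n)"
definition "sampling_term T = (\<Sum>i<B. (cnt i T * y i - lsum i T)\<^sup>2 / (n * cnt i T))"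

lemma measurable_weighted_gap [measurable]: "weighted_gap \<in> borel_measurable P"
  unfolding weighted_gap_def by measurable

lemma measurable_cross_term [measurable]: "cross_term \<in> borel_measurable P"
  unfolding cross_term_def by measurable

lemma measurable_sampling_term [measurable]: "sampling_term \<in> borel_measurable P"
  unfolding sampling_term_def by measurable

lemma plugin_err2_decomposition:
  assumes T: "T \<in> space P"
  shows "plugin_err2 f s B n T = weighted_gap T + cross_term T + sampling_term T"
proof -
  have "hat_p f s n T i * (s i - hat_y f s n T i)\<^sup>2
      = cnt i T / n * (gap i)\<^sup>2 + 2 * gap i * (cnt i T * y i - lsum i T) / n
        + (cnt i T * y i - lsum i T)\<^sup>2 / (n * cnt i T)" for i
  proof -
    have "hat_p f s n T i = cnt i T / n" "hat_y f s n T i = lsum i T / cnt i T"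
      by (simp_all add: hat_p_def hat_y_def bin_idx_eq[OF T] sample_count_eq_card sample_sum_eq_sum)
    moreover have "lsum i T = 0" if "cnt i T = 0"
      using that by (rule sample_sum_eq_0_if_count_eq_0)
    moreover have "cnt i T / n * (s i - lsum i T / cnt i T)\<^sup>2
        = cnt i T / n * (gap i)\<^sup>2 + 2 * gap i * (cnt i T * y i - lsum i T) / n
          + (cnt i T * y i - lsum i T)\<^sup>2 / (n * cnt i T)" if "cnt i T \<noteq> 0"
      using n_pos that by (simp add: gap_def field_simps power2_eq_square)
    ultimately show ?thesis
      by (cases "cnt i T = 0") simp_all
  qed
  then show ?thesis
    by (simp add: plugin_err2_def weighted_gap_def cross_term_def sampling_term_def sum.distrib)
qed

lemma measurable_plugin_err2 [measurable]: "plugin_err2 f s B n \<in> borel_measurable P"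
  by (subst measurable_cong[OF plugin_err2_decomposition]) simp_all

lemma integrable_bin_exp: "integrable D (\<lambda>z. indicator (bin i) z * exp (\<theta> * (c - snd z)))"
  using sets_bin measurable_snd labels_unit by (rule D.integrable_indicator_mult_exp)

(* exp (\<theta> * cross_term T - \<theta>^2 * weighted_gap T / (2 n)) factors over the sample into these
   factors, each of mean at most 1 by Hoeffding's lemma in the bin of z. *)
definition "cross_factor \<theta> z =
  (\<Sum>i<B. indicator (bin i) z * exp (2 * \<theta> * gap i / n * (y i - snd z) - (\<theta> * gap i / n)\<^sup>2 / 2))"

lemma cross_factor_nonneg: "0 \<le> cross_factor \<theta> z"
  unfolding cross_factor_def by (intro sum_nonneg) simp

lemma cross_factor_summand_eq:
  "indicator (bin i) z * exp (2 * \<theta> * gap i / n * (y i - snd z) - (\<theta> * gap i / n)\<^sup>2 / 2)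
    = exp (- (\<theta> * gap i / n)\<^sup>2 / 2) * (indicator (bin i) z * exp (2 * \<theta> * gap i / n * (y i - snd z)))"
  by (simp add: exp_diff exp_minus field_simps)

lemma integrable_cross_factor: "integrable D (cross_factor \<theta>)"
  unfolding cross_factor_def cross_factor_summand_eq
  by (intro Bochner_Integration.integrable_sum integrable_mult_right integrable_bin_exp)

lemma integral_cross_factor_le: "integral\<^sup>L D (cross_factor \<theta>) \<le> 1"
proof -
  define \<mu> where "\<mu> i = 2 * \<theta> * gap i / n" for i
  have "integral\<^sup>L D (cross_factor \<theta>)
      = (\<Sum>i<B. exp (- (\<theta> * gap i / n)\<^sup>2 / 2) * (\<integral>z. indicator (bin i) z * exp (\<mu> i * (y i - snd z)) \<partial>D))"
    unfolding cross_factor_def cross_factor_summand_eq \<mu>_def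
    by (subst Bochner_Integration.integral_sum; (intro integrable_mult_right integrable_bin_exp)?; simp)
  also have "\<dots> \<le> (\<Sum>i<B. exp (- (\<theta> * gap i / n)\<^sup>2 / 2) * (p i * exp ((\<mu> i)\<^sup>2 / 8)))"
    using D.integral_indicator_exp_le[OF sets_bin measurable_snd labels_unit] p_pos
    by (intro sum_mono mult_left_mono) (auto simp: p_eq y_eq)
  also have "\<dots> = (\<Sum>i<B. p i)"
  proof (rule sum.cong)
    fix i
    have "(\<mu> i)\<^sup>2 / 8 = (\<theta> * gap i / n)\<^sup>2 / 2"
      by (simp add: \<mu>_def power_mult_distrib power_divide)
    then show "exp (- (\<theta> * gap i / n)\<^sup>2 / 2) * (p i * exp ((\<mu> i)\<^sup>2 / 8)) = p i"
      by (simp add: exp_minus)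
  qed simp
  finally show ?thesis
    by (simp add: sum_p)
qed

lemma prod_cross_factor:
  assumes T: "T \<in> space P"
  shows "(\<Prod>j<n. cross_factor \<theta> (T j)) = exp (\<theta> * cross_term T - \<theta>\<^sup>2 * weighted_gap T / (2 * real n))"
proof -
  define a where "a i = 2 * \<theta> * gap i / n * y i - (\<theta> * gap i / n)\<^sup>2 / 2" for i
  define b where "b i = - (2 * \<theta> * gap i / n)" for i
  have factor: "cross_factor \<theta> z = exp (\<Sum>i<B. indicator (bin i) z * (a i + b i * snd z))"
    if "z \<in> space D" for z
  proof -
    obtain i where i: "i < B" "z \<in> bin i"
      using \<open>z \<in> space D\<close> by (rule bin_cover)
    show ?thesis
      unfolding cross_factor_def sum_indicator_bins[OF i(2,1)]
      by (simp add: a_def b_def algebra_simps diff_divide_distrib)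
  qed
  have "(\<Prod>j<n. cross_factor \<theta> (T j)) = exp (\<Sum>j<n. \<Sum>i<B. indicator (bin i) (T j) * (a i + b i * snd (T j)))"
    using T by (simp add: factor space_PiM PiE_def Pi_iff exp_sum)
  also have "(\<Sum>j<n. \<Sum>i<B. indicator (bin i) (T j) * (a i + b i * snd (T j)))
      = (\<Sum>i<B. a i * cnt i T + b i * lsum i T)"
    by (subst sum.swap) (simp add: sum_indicator_affine)
  also have "\<dots> = \<theta> * cross_term T - \<theta>\<^sup>2 * weighted_gap T / (2 * real n)"
    using n_pos
    by (simp add: a_def b_def cross_term_def weighted_gap_def sum_distrib_left sum_divide_distrib
        flip: sum_subtractf) (intro sum.cong refl, simp add: field_simps power2_eq_square)
  finally show ?thesis .
qed

lemma prob_cross_term_ge_le: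
  fixes V t \<sigma> :: real
  assumes V: "0 < V" and t: "0 \<le> t" and \<sigma>: "\<bar>\<sigma>\<bar> = 1"
  shows "P.prob {T \<in> space P. t \<le> \<sigma> * cross_term T \<and> weighted_gap T \<le> V} \<le> exp (- (n * t\<^sup>2 / (2 * V)))"
proof -
  define \<theta> where "\<theta> = \<sigma> * (n * t / V)"
  have "P.prob {T \<in> space P. t \<le> \<sigma> * cross_term T \<and> weighted_gap T \<le> V}
      \<le> (\<Prod>j<n. integral\<^sup>L D (cross_factor \<theta>)) / exp (n * t\<^sup>2 / (2 * V))"
  proof (rule measure_PiM_le_prod_integral[OF prob_space_D])
    show "{T \<in> space P. t \<le> \<sigma> * cross_term T \<and> weighted_gap T \<le> V} \<in> sets P"
      by measurable
    fix T assume "T \<in> {T \<in> space P. t \<le> \<sigma> * cross_term T \<and> weighted_gap T \<le> V}"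
    then have T: "T \<in> space P" and cross: "t \<le> \<sigma> * cross_term T" and weighted: "weighted_gap T \<le> V"
      by auto
    have "2 * (n * t\<^sup>2 / (2 * V)) = (n * t / V) * t"
      by (simp add: power2_eq_square)
    also have "\<dots> \<le> (n * t / V) * (\<sigma> * cross_term T)"
      using cross t V by (intro mult_left_mono) auto
    also have "\<dots> = \<theta> * cross_term T"
      by (simp add: \<theta>_def)
    finally have linear: "2 * (n * t\<^sup>2 / (2 * V)) \<le> \<theta> * cross_term T" .
    have \<theta>_sq: "\<theta>\<^sup>2 = (n * t / V)\<^sup>2"
      using abs_mult_self_eq[of \<sigma>] \<sigma> by (simp add: \<theta>_def power_mult_distrib power2_eq_square)
    have "\<theta>\<^sup>2 * weighted_gap T / (2 * real n) \<le> (n * t / V)\<^sup>2 * V / (2 * real n)"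
      unfolding \<theta>_sq using weighted n_pos by (intro divide_right_mono mult_left_mono) auto
    also have "\<dots> = n * t\<^sup>2 / (2 * V)"
      using V n_pos by (simp add: power2_eq_square field_simps)
    finally have quadratic: "\<theta>\<^sup>2 * weighted_gap T / (2 * real n) \<le> n * t\<^sup>2 / (2 * V)" .
    have "n * t\<^sup>2 / (2 * V) + \<theta>\<^sup>2 * weighted_gap T / (2 * real n) \<le> 2 * (n * t\<^sup>2 / (2 * V))"
      using add_left_mono[OF quadratic, of "n * t\<^sup>2 / (2 * V)"] by (simp only: mult_2)
    then have "n * t\<^sup>2 / (2 * V) \<le> \<theta> * cross_term T - \<theta>\<^sup>2 * weighted_gap T / (2 * real n)"
      unfolding le_diff_eq using linear by (rule order_trans)
    then show "exp (n * t\<^sup>2 / (2 * V)) \<le> (\<Prod>j<n. cross_factor \<theta> (T j))"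
      by (simp add: prod_cross_factor[OF T])
  qed (simp_all add: integrable_cross_factor cross_factor_nonneg)
  also have "\<dots> \<le> 1 / exp (n * t\<^sup>2 / (2 * V))"
  proof (rule divide_right_mono)
    have "0 \<le> integral\<^sup>L D (cross_factor \<theta>)"
      by (rule integral_nonneg_AE) (simp add: cross_factor_nonneg)
    then show "(\<Prod>j<n. integral\<^sup>L D (cross_factor \<theta>)) \<le> 1"
      by (simp add: integral_cross_factor_le power_le_one)
  qed simp
  finally show ?thesis
    by (simp add: exp_minus inverse_eq_divide)
qed

definition "c = sqrt (3 / (real n * Min (p ` {..<B})) * L)"

abbreviation "E2 \<equiv> cal_err2 D f s B"

lemma E2_eq: "E2 = (\<Sum>i<B. p i * (gap i)\<^sup>2)"
  by (simp add: cal_err2_def gap_def)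

lemma Min_p_pos: "0 < Min (p ` {..<B})"
  using B_pos p_pos by (subst Min_gr_iff) auto

lemma c_nonneg: "0 \<le> c"
  using Min_p_pos L_pos by (simp add: c_def)

lemma count_deviation_le:
  assumes i: "i < B" and dev: "\<bar>cnt i T - n * p i\<bar> < sqrt (3 * n * p i * L)"
  shows "\<bar>cnt i T / n - p i\<bar> \<le> c * p i"
proof -
  define pmin where "pmin = Min (p ` {..<B})"
  have pmin: "0 < pmin" "pmin \<le> p i"
    using Min_p_pos i by (simp_all add: pmin_def)
  have "3 * n * p i * L = (3 * n * p i * L) * 1"
    by simp
  also have "\<dots> \<le> (3 * n * p i * L) * (p i / pmin)"
    using pmin p_pos[OF i] L_pos by (intro mult_left_mono) auto
  also have "\<dots> = (n * (c * p i))\<^sup>2"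
    using pmin(1) L_pos n_pos
    by (simp add: c_def pmin_def[symmetric] power_mult_distrib field_simps power2_eq_square)
  finally have "sqrt (3 * n * p i * L) \<le> n * (c * p i)"
    using c_nonneg p_pos[OF i] by (simp add: real_le_lsqrt)
  then have "\<bar>cnt i T - n * p i\<bar> \<le> n * (c * p i)"
    using dev by simp
  then show ?thesis
    using n_pos by (simp add: abs_divide field_simps)
qed

lemma weighted_gap_deviation:
  assumes "\<And>i. i < B \<Longrightarrow> \<bar>cnt i T - n * p i\<bar> < sqrt (3 * n * p i * L)"
  shows "\<bar>weighted_gap T - E2\<bar> \<le> c * E2"
proof -
  have "\<bar>weighted_gap T - E2\<bar> = \<bar>\<Sum>i<B. (cnt i T / n - p i) * (gap i)\<^sup>2\<bar>"
    by (simp add: weighted_gap_def E2_eq sum_subtractf left_diff_distrib)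
  also have "\<dots> \<le> (\<Sum>i<B. \<bar>cnt i T / n - p i\<bar> * (gap i)\<^sup>2)"
    by (rule order_trans[OF sum_abs]) (simp add: abs_mult)
  also have "\<dots> \<le> (\<Sum>i<B. c * p i * (gap i)\<^sup>2)"
    using count_deviation_le[OF _ assms] by (intro sum_mono mult_right_mono) auto
  also have "\<dots> = c * E2"
    by (simp add: E2_eq sum_distrib_left mult_ac)
  finally show ?thesis .
qed

lemma sampling_term_nonneg: "0 \<le> sampling_term T"
  unfolding sampling_term_def using sample_count_nonneg
  by (intro sum_nonneg divide_nonneg_nonneg mult_nonneg_nonneg) auto

lemma sampling_term_le:
  assumes "\<And>i. i < B \<Longrightarrow> (cnt i T * y i - lsum i T)\<^sup>2 \<le> L / 2 * cnt i T"
  shows "sampling_term T \<le> real B / (2 * real n) * L"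
proof -
  have "(cnt i T * y i - lsum i T)\<^sup>2 / (n * cnt i T) \<le> L / (2 * n)" if i: "i < B" for i
  proof (cases "cnt i T = 0")
    case False
    then have "0 < cnt i T"
      using sample_count_nonneg[of "bin i" n T] by simp
    then have "(cnt i T * y i - lsum i T)\<^sup>2 / (n * cnt i T) \<le> (L / 2 * cnt i T) / (n * cnt i T)"
      using assms[OF i] n_pos by (intro divide_right_mono) auto
    then show ?thesis
      using False by simp
  qed (use L_pos in simp)
  then have "sampling_term T \<le> (\<Sum>i<B. L / (2 * n))"
    unfolding sampling_term_def by (intro sum_mono) auto
  then show ?thesis
    by simp
qed

lemma exp_minus_L: "exp (- L) = \<delta> / (2 * B)"
  using B_pos \<delta>_pos by (simp add: L_def exp_minus)

lemma prob_count_deviation: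
  "P.prob (\<Union>i<B. {T \<in> space P. sqrt (3 * n * p i * L) \<le> \<bar>cnt i T - n * p i\<bar>}) \<le> \<delta>"
proof -
  have "P.prob (\<Union>i<B. {T \<in> space P. sqrt (3 * n * p i * L) \<le> \<bar>cnt i T - n * p i\<bar>})
      \<le> (\<Sum>i<B. P.prob {T \<in> space P. sqrt (3 * n * p i * L) \<le> \<bar>cnt i T - n * p i\<bar>})"
    by (rule measure_UNION_le) auto
  also have "\<dots> \<le> (\<Sum>i<B. 2 * exp (- L))"
    using D.chernoff_sample_count[OF sets_bin L_pos] bin_large by (intro sum_mono) (simp add: p_eq)
  also have "\<dots> = \<delta>"
    using B_pos by (simp add: exp_minus_L)
  finally show ?thesis .
qed

lemma prob_label_deviation:
  "P.prob (\<Union>i<B. {T \<in> space P. L / 2 * cnt i T < (cnt i T * y i - lsum i T)\<^sup>2}) \<le> \<delta>"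
proof -
  have "P.prob (\<Union>i<B. {T \<in> space P. L / 2 * cnt i T < (cnt i T * y i - lsum i T)\<^sup>2})
      \<le> (\<Sum>i<B. P.prob {T \<in> space P. L / 2 * cnt i T < (cnt i T * y i - lsum i T)\<^sup>2})"
    by (rule measure_UNION_le) auto
  also have "\<dots> \<le> (\<Sum>i<B. 2 * exp (- L))"
    using D.conditional_hoeffding_sample_sum[OF sets_bin measurable_snd labels_unit _ L_pos] p_pos
    by (intro sum_mono) (simp add: p_eq y_eq)
  also have "\<dots> = \<delta>"
    using B_pos by (simp add: exp_minus_L)
  finally show ?thesis .
qed

lemma cross_term_eq_0_if_weighted_gap_le_0:
  assumes "weighted_gap T \<le> 0"
  shows "cross_term T = 0"
proof -
  have nonneg: "0 \<le> cnt i T / n * (gap i)\<^sup>2" for i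
    by (simp add: sample_count_nonneg)
  then have "weighted_gap T = 0"
    using assms unfolding weighted_gap_def by (meson antisym sum_nonneg)
  then have "cnt i T / n * (gap i)\<^sup>2 = 0" if "i < B" for i
    using that nonneg by (simp add: weighted_gap_def sum_nonneg_eq_0_iff)
  then have zero: "cnt i T = 0 \<or> gap i = 0" if "i < B" for i
    using that n_pos by simp
  have "2 * gap i * (cnt i T * y i - lsum i T) / n = 0" if "i < B" for i
    using zero[OF that] sample_sum_eq_0_if_count_eq_0[of "bin i" n T snd] by auto
  then show ?thesis
    unfolding cross_term_def by (intro sum.neutral) simp
qed

lemma prob_cross_deviation:
  fixes V :: real
  assumes V: "0 \<le> V"
  shows "P.prob {T \<in> space P. sqrt (2 * V / n * ln (2 / \<delta>)) < \<bar>cross_term T\<bar> \<and> weighted_gap T \<le> V} \<le> \<delta>"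
proof (cases "V = 0")
  case True
  then have empty: "{T \<in> space P. sqrt (2 * V / n * ln (2 / \<delta>)) < \<bar>cross_term T\<bar> \<and> weighted_gap T \<le> V} = {}"
    using cross_term_eq_0_if_weighted_gap_le_0 by auto
  show ?thesis
    unfolding empty using \<delta>_pos by simp
next
  case False
  with V have V: "0 < V"
    by simp
  define t where "t = sqrt (2 * V / n * ln (2 / \<delta>))"
  have t: "0 \<le> t" "n * t\<^sup>2 / (2 * V) = ln (2 / \<delta>)"
    using V n_pos \<delta>_pos \<delta>_less_1 by (simp_all add: t_def)
  have "P.prob {T \<in> space P. t < \<bar>cross_term T\<bar> \<and> weighted_gap T \<le> V}
      \<le> P.prob ({T \<in> space P. t \<le> 1 * cross_term T \<and> weighted_gap T \<le> V}
               \<union> {T \<in> space P. t \<le> (- 1) * cross_term T \<and> weighted_gap T \<le> V})"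
    by (intro P.finite_measure_mono) auto
  also have "\<dots> \<le> exp (- ln (2 / \<delta>)) + exp (- ln (2 / \<delta>))"
    using prob_cross_term_ge_le[OF V t(1), of 1] prob_cross_term_ge_le[OF V t(1), of "- 1"] t(2)
    by (intro order_trans[OF measure_Un_le] add_mono) auto
  also have "\<dots> = \<delta>"
    using \<delta>_pos by (simp add: exp_minus)
  finally show ?thesis
    by (simp add: t_def)
qed

lemma E2_nonneg: "0 \<le> E2"
  unfolding E2_eq using p_pos by (intro sum_nonneg mult_nonneg_nonneg) (auto intro: less_imp_le)

lemma plugin_err2_deviation_le:
  assumes T: "T \<in> space P"
    and count: "\<And>i. i < B \<Longrightarrow> \<bar>cnt i T - n * p i\<bar> < sqrt (3 * n * p i * L)"
    and cross: "weighted_gap T \<le> (1 + c) * E2 \<Longrightarrow> \<bar>cross_term T\<bar> \<le> sqrt (2 * ((1 + c) * E2) / n * ln (2 / \<delta>))"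
    and label: "\<And>i. i < B \<Longrightarrow> (cnt i T * y i - lsum i T)\<^sup>2 \<le> L / 2 * cnt i T"
  shows "\<bar>plugin_err2 f s B n T - E2\<bar>
    \<le> c * E2 + sqrt (2 * (1 + c) * E2 / real n * ln (2 / \<delta>)) + real B / (2 * real n) * L"
proof -
  have weighted: "\<bar>weighted_gap T - E2\<bar> \<le> c * E2"
    using count by (rule weighted_gap_deviation)
  then have "\<bar>cross_term T\<bar> \<le> sqrt (2 * (1 + c) * E2 / n * ln (2 / \<delta>))"
    using cross by (simp add: algebra_simps)
  moreover have "sampling_term T \<le> real B / (2 * real n) * L"
    using label by (rule sampling_term_le)
  ultimately have "\<bar>(weighted_gap T - E2) + cross_term T + sampling_term T\<bar>
      \<le> c * E2 + sqrt (2 * (1 + c) * E2 / real n * ln (2 / \<delta>)) + real B / (2 * real n) * L"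
    using weighted sampling_term_nonneg[of T] by linarith
  moreover have "plugin_err2 f s B n T - E2 = (weighted_gap T - E2) + cross_term T + sampling_term T"
    using plugin_err2_decomposition[OF T] by simp
  ultimately show ?thesis
    by simp
qed

lemma plugin_err2_deviation:
  "1 - 3 * \<delta> \<le> P.prob {T \<in> space P. \<bar>plugin_err2 f s B n T - E2\<bar>
      \<le> c * E2 + sqrt (2 * (1 + c) * E2 / real n * ln (2 / \<delta>)) + real B / (2 * real n) * L}"
  (is "_ \<le> P.prob ?Good")
proof -
  define Count where "Count = (\<Union>i<B. {T \<in> space P. sqrt (3 * n * p i * L) \<le> \<bar>cnt i T - n * p i\<bar>})"
  define Cross where "Cross = {T \<in> space P.
    sqrt (2 * ((1 + c) * E2) / n * ln (2 / \<delta>)) < \<bar>cross_term T\<bar> \<and> weighted_gap T \<le> (1 + c) * E2}"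
  define Label where "Label = (\<Union>i<B. {T \<in> space P. L / 2 * cnt i T < (cnt i T * y i - lsum i T)\<^sup>2})"
  have sets: "Count \<in> sets P" "Cross \<in> sets P" "Label \<in> sets P"
    unfolding Count_def Cross_def Label_def by measurable
  have "P.prob (Count \<union> Cross \<union> Label) \<le> P.prob Count + P.prob Cross + P.prob Label"
    using sets by (intro order_trans[OF measure_Un_le] add_right_mono measure_Un_le) auto
  also have "\<dots> \<le> 3 * \<delta>"
    using prob_count_deviation prob_cross_deviation[of "(1 + c) * E2"] prob_label_deviation c_nonneg E2_nonneg
    unfolding Count_def Cross_def Label_def by simp
  finally have bad: "P.prob (Count \<union> Cross \<union> Label) \<le> 3 * \<delta>" .
  have "space P - (Count \<union> Cross \<union> Label) \<subseteq> ?Good"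
  proof
    fix T assume T: "T \<in> space P - (Count \<union> Cross \<union> Label)"
    have "\<bar>plugin_err2 f s B n T - E2\<bar>
        \<le> c * E2 + sqrt (2 * (1 + c) * E2 / real n * ln (2 / \<delta>)) + real B / (2 * real n) * L"
    proof (rule plugin_err2_deviation_le)
      show "T \<in> space P"
        using T by simp
      show "\<bar>cnt i T - n * p i\<bar> < sqrt (3 * n * p i * L)" if "i < B" for i
        using T that by (auto simp: Count_def not_le)
      show "\<bar>cross_term T\<bar> \<le> sqrt (2 * ((1 + c) * E2) / n * ln (2 / \<delta>))"
        if "weighted_gap T \<le> (1 + c) * E2"
        using T that by (auto simp: Cross_def not_less)
      show "(cnt i T * y i - lsum i T)\<^sup>2 \<le> L / 2 * cnt i T" if "i < B" for i
        using T that by (auto simp: Label_def not_less)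
    qed
    with T show "T \<in> ?Good"
      by simp
  qed
  then have "P.prob (space P - (Count \<union> Cross \<union> Label)) \<le> P.prob ?Good"
    by (intro P.finite_measure_mono) measurable
  then show ?thesis
    using bad sets by (simp add: P.prob_compl)
qed

end

theorem mainTheorem10:
  fixes Mx :: "'x measure" and D :: "('x \<times> real) measure"
    and f :: "'x \<Rightarrow> real" and s :: "nat \<Rightarrow> real" and B n :: nat and \<delta> :: real
  assumes "prob_space D"
    and "sets D = sets (Mx \<Otimes>\<^sub>M borel)"
    and "AE z in D. snd z \<in> {0, 1}"
    and "f \<in> borel_measurable Mx"
    and "\<And>x. x \<in> space Mx \<Longrightarrow> f x \<in> s ` {..<B}"
    and "inj_on s {..<B}"
    and "\<And>i. i < B \<Longrightarrow> s i \<in> {0..1}"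
    and "n > 0"
    and "0 < \<delta>" and "\<delta> < 1"
    and "\<And>i. i < B \<Longrightarrow> cal_p D f s i > 12 / real n * ln (2 * real B / \<delta>)"
  shows "let c = sqrt (3 / (real n * Min (cal_p D f s ` {..<B})) * ln (2 * real B / \<delta>));
             E2 = cal_err2 D f s B
         in measure (PiM {..<n} (\<lambda>_. D))
              {T \<in> space (PiM {..<n} (\<lambda>_. D)).
                 \<bar>plugin_err2 f s B n T - E2\<bar>
                   \<le> c * E2 + sqrt (2 * (1 + c) * E2 / real n * ln (2 / \<delta>))
                      + real B / (2 * real n) * ln (2 * real B / \<delta>)}
            \<ge> 1 - 3 * \<delta>"
proof -
  interpret calibration_setting Mx D f s B n \<delta>
    using assms(1-6) assms(8-11) by (rule calibration_setting.intro)
  show ?thesis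
    using plugin_err2_deviation by (simp add: Let_def c_def L_def)
qed

end
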